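(* Let $\mathcal{D}$ be a finite set, $n\ge3$ and $k\ge0$ integers. The share of $n$-ary relations on $\mathcal{D}$ that are projoin reducible with $k$ parameters, among all $2^{|\mathcal{D}|^n}$ $n$-ary relations on $\mathcal{D}$, is $<1$ when $|\mathcal{D}|>\binom{n+k}{n-1}$, and tends to $0$ as $|\mathcal{D}|\to\infty$ (with $n,k$ fixed).
   Context: An $n$-ary relation on $\mathcal{D}$ is $R\subseteq\mathcal{D}^\Sigma$ with $\Sigma=\{1,\dots,n\}$. For attributed relations $R_i\subseteq\mathcal{D}^{\Lambda_i}$, the join is $\{a\in\mathcal{D}^{\cup_i\Lambda_i}: a|_{\Lambda_i}\in R_i\ \forall i\}$ and $\pi_\Gamma$ denotes restriction of all tuples to $\Gamma$. $R$ is projoin reducible with $k$ parameters if there is a set $\textup{T}$ of $k$ attributes disjoint from $\Sigma$, a cover $\textup{T}\cup\Sigma=\Lambda_1\cup\dots\cup\Lambda_m$ with $0<|\Lambda_i|<n$, and $R^{\Lambda_i}\subseteq\mathcal{D}^{\Lambda_i}$ such that $R=\pi_\Sigma[R^{\Lambda_1}\Join\dots\Join R^{\Lambda_m}]$. *)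

theory Defs
  imports Complex_Main "HOL-Library.FuncSet"
begin

text \<open>Attributes are natural numbers; a tuple over the attribute set L with values
in D is an extensional function in PiE L (%_. D) (undefined outside L).
The standard attribute set is Sigma n = {1..n}.\<close>

definition Sig :: "nat \<Rightarrow> nat set" where
  "Sig n = {1..n}"

definition nary_relations :: "'a set \<Rightarrow> nat \<Rightarrow> (nat \<Rightarrow> 'a) set set" where
  "nary_relations D n = Pow (Sig n \<rightarrow>\<^sub>E D)"

definition join :: "'a set \<Rightarrow> nat \<Rightarrow> (nat \<Rightarrow> nat set) \<Rightarrow> (nat \<Rightarrow> (nat \<Rightarrow> 'a) set)
                     \<Rightarrow> (nat \<Rightarrow> 'a) set" where
  "join D m Ls Rs = {a \<in> (\<Union>i<m. Ls i) \<rightarrow>\<^sub>E D. \<forall>i<m. restrict a (Ls i) \<in> Rs i}"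

definition proj :: "nat set \<Rightarrow> (nat \<Rightarrow> 'a) set \<Rightarrow> (nat \<Rightarrow> 'a) set" where
  "proj G S = (\<lambda>a. restrict a G) ` S"

definition projoin_reducible :: "'a set \<Rightarrow> nat \<Rightarrow> nat \<Rightarrow> (nat \<Rightarrow> 'a) set \<Rightarrow> bool" where
  "projoin_reducible D n k R \<longleftrightarrow>
     (\<exists>T m Ls Rs. finite T \<and> card T = k \<and> T \<inter> Sig n = {} \<and>
        (\<Union>i<m. Ls i) = T \<union> Sig n \<and>
        (\<forall>i<m. 0 < card (Ls i) \<and> card (Ls i) < n \<and> Rs i \<subseteq> (Ls i \<rightarrow>\<^sub>E D)) \<and>
        R = proj (Sig n) (join D m Ls Rs))"

definition reducible_share :: "'a set \<Rightarrow> nat \<Rightarrow> nat \<Rightarrow> real" where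
  "reducible_share D n k =
     real (card {R \<in> nary_relations D n. projoin_reducible D n k R}) / 2 ^ (card D ^ n)"

end

theory Submission
  imports Defs "HOL-Combinatorics.Permutations"
begin

text \<open>A permutation of the attributes that fixes \<open>Sig n\<close> moves the k parameters to
\<open>{n+1..n+k}\<close>. Each factor of the join then lives on fewer than n of the n + k
attributes, so it can be absorbed into a relation on one of the
\<open>C = (n + k) choose (n - 1)\<close> subsets of \<open>{1..n+k}\<close> of size n - 1. Hence a
reducible relation is determined by C relations of arity n - 1, and with \<open>d = card D\<close>
there are at most \<open>2 ^ (C * d ^ (n - 1))\<close> of them among \<open>2 ^ d ^ n\<close> relations: the
share is at most \<open>2 ^ (-(d - C) * d ^ (n - 1)) \<le> 2 ^ (-(d - C))\<close>.\<close>

lemma exists_permutes_image: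
  assumes "finite A" "finite B" "card A = card B"
  obtains p where "p permutes A \<union> B" "p ` A = B"
proof -
  define C where "C = A \<union> B"
  obtain f where f: "bij_betw f A B"
    using assms finite_same_card_bij by blast
  have "finite C" "card (C - A) = card (C - B)"
    using assms by (simp_all add: C_def card_Diff_subset_Int Int_commute)
  then obtain g where g: "bij_betw g (C - A) (C - B)"
    using finite_same_card_bij by (metis finite_Diff)
  define p where "p x = (if x \<in> A then f x else if x \<in> C then g x else x)" for x
  have "bij_betw p A B"
    using f by (rule bij_betw_cong[THEN iffD1, rotated]) (simp add: p_def)
  moreover have "bij_betw p (C - A) (C - B)"
    using g by (rule bij_betw_cong[THEN iffD1, rotated]) (simp add: p_def)
  ultimately have "bij_betw p C C"
    using bij_betw_combine[of p A B "C - A" "C - B"] by (simp add: C_def Un_absorb1 sup_commute)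
  then have "p permutes C"
    by (auto simp: permutes_altdef p_def C_def)
  then show thesis
    using that \<open>bij_betw p A B\<close> by (simp add: C_def bij_betw_imp_surj_on)
qed

lemma vimage_comp_PiE_iff:
  assumes "surj e"
  shows "z \<circ> e \<in> e -` U \<rightarrow>\<^sub>E D \<longleftrightarrow> z \<in> U \<rightarrow>\<^sub>E D"
proof -
  have all_e: "(\<forall>x. P (e x)) \<longleftrightarrow> (\<forall>y. P y)" for P
    using assms by (metis surjD)
  show ?thesis
    using all_e[of "\<lambda>y. y \<in> U \<longrightarrow> z y \<in> D"] all_e[of "\<lambda>y. y \<notin> U \<longrightarrow> z y = undefined"]
    by (simp add: PiE_iff extensional_def Ball_def)
qed

lemma restrict_comp_vimage: "restrict (z \<circ> e) (e -` L) = restrict z L \<circ> e"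
  by (auto simp: fun_eq_iff)

text \<open>Composing with a permutation of all attributes, rather than with a bijection between
finite attribute sets, keeps tuples extensional without any \<open>restrict\<close>.\<close>

lemma join_comp_bij:
  assumes "bij e"
  shows "join D m (\<lambda>i. e -` Ls i) (\<lambda>i. (\<lambda>c. c \<circ> e) ` Rs i) = (\<lambda>z. z \<circ> e) ` join D m Ls Rs"
proof -
  have inv_e: "e \<circ> inv e = id" "inv e \<circ> e = id"
    using assms by (simp_all add: bij_is_inj bij_is_surj flip: surj_iff inj_iff)
  have "inj (\<lambda>c. c \<circ> e)"
    by (rule inj_on_inverseI[of _ "\<lambda>c. c \<circ> inv e"]) (simp add: comp_assoc inv_e)
  then have "c \<circ> e \<in> (\<lambda>c. c \<circ> e) ` C \<longleftrightarrow> c \<in> C" for c :: "nat \<Rightarrow> 'a" and C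
    by (metis inj_image_mem_iff)
  moreover have "(\<Union>i<m. e -` Ls i) = e -` (\<Union>i<m. Ls i)"
    by blast
  ultimately have member: "z \<circ> e \<in> join D m (\<lambda>i. e -` Ls i) (\<lambda>i. (\<lambda>c. c \<circ> e) ` Rs i)
      \<longleftrightarrow> z \<in> join D m Ls Rs" for z
    using assms by (simp add: join_def vimage_comp_PiE_iff restrict_comp_vimage bij_is_surj)
  show ?thesis
  proof (intro set_eqI iffI)
    fix w assume "w \<in> join D m (\<lambda>i. e -` Ls i) (\<lambda>i. (\<lambda>c. c \<circ> e) ` Rs i)"
    then have "w \<circ> inv e \<in> join D m Ls Rs"
      using member[of "w \<circ> inv e"] by (simp add: comp_assoc inv_e)
    then show "w \<in> (\<lambda>z. z \<circ> e) ` join D m Ls Rs"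
      by (rule image_eqI[rotated]) (simp add: comp_assoc inv_e)
  qed (use member in auto)
qed

lemma proj_comp_fixing:
  assumes "\<forall>x\<in>G. e x = x"
  shows "proj G ((\<lambda>z. z \<circ> e) ` X) = proj G X"
proof -
  have "restrict (z \<circ> e) G = restrict z G" for z :: "nat \<Rightarrow> 'a"
    using assms by (simp add: fun_eq_iff)
  then show ?thesis
    by (simp add: proj_def image_image)
qed

lemma projoin_reducible_standard_params:
  assumes "projoin_reducible D n k R"
  obtains m Ls Rs where "(\<Union>i<m. Ls i) = {1..n+k}"
    and "\<forall>i<m. card (Ls i) < n \<and> Rs i \<subseteq> Ls i \<rightarrow>\<^sub>E D"
    and "R = proj (Sig n) (join D m Ls Rs)"
proof -
  obtain T m Ls Rs where T: "finite T" "card T = k" "T \<inter> Sig n = {}"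
    and U: "(\<Union>i<m. Ls i) = T \<union> Sig n"
    and L: "\<forall>i<m. 0 < card (Ls i) \<and> card (Ls i) < n \<and> Rs i \<subseteq> Ls i \<rightarrow>\<^sub>E D"
    and R: "R = proj (Sig n) (join D m Ls Rs)"
    using assms unfolding projoin_reducible_def by blast
  obtain p where p: "p permutes {n+1..n+k} \<union> T" "p ` {n+1..n+k} = T"
    using exists_permutes_image[of "{n+1..n+k}" T] T by auto
  have "bij p"
    using p(1) by (rule permutes_bij)
  have fixes_Sig: "\<forall>x\<in>Sig n. p x = x"
    using T(3) by (auto simp: Sig_def intro: permutes_not_in[OF p(1)])
  have "p ` {1..n+k} = T \<union> Sig n"
    using p(2) fixes_Sig by (force simp: Sig_def)
  then have "(\<Union>i<m. p -` Ls i) = {1..n+k}"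
    using U \<open>bij p\<close> by (metis bij_is_inj inj_vimage_image_eq vimage_UN)
  moreover have "\<forall>i<m. card (p -` Ls i) < n \<and> (\<lambda>c. c \<circ> p) ` Rs i \<subseteq> p -` Ls i \<rightarrow>\<^sub>E D"
  proof -
    have card_vimage: "card (p -` L) = card L" for L
      using \<open>bij p\<close> by (simp add: card_vimage_inj bij_is_inj bij_is_surj)
    have comp_PiE: "c \<circ> p \<in> p -` L \<rightarrow>\<^sub>E D \<longleftrightarrow> c \<in> L \<rightarrow>\<^sub>E D" for c :: "nat \<Rightarrow> 'a" and L
      using \<open>bij p\<close> by (simp add: vimage_comp_PiE_iff bij_is_surj)
    show ?thesis
      unfolding card_vimage image_subset_iff comp_PiE using L by blast
  qed
  moreover have "R = proj (Sig n) (join D m (\<lambda>i. p -` Ls i) (\<lambda>i. (\<lambda>c. c \<circ> p) ` Rs i))"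
    using R fixes_Sig by (simp add: join_comp_bij[OF \<open>bij p\<close>] proj_comp_fixing)
  ultimately show thesis
    by (rule that)
qed

definition join_on_card_subsets ::
    "'a set \<Rightarrow> nat set \<Rightarrow> nat \<Rightarrow> (nat set \<Rightarrow> (nat \<Rightarrow> 'a) set) \<Rightarrow> (nat \<Rightarrow> 'a) set" where
  "join_on_card_subsets D U r Q =
     {z \<in> U \<rightarrow>\<^sub>E D. \<forall>S. S \<subseteq> U \<and> card S = r \<longrightarrow> restrict z S \<in> Q S}"

lemma join_eq_join_on_card_subsets:
  assumes "finite U" "(\<Union>i<m. Ls i) = U" "\<forall>i<m. card (Ls i) \<le> r" "r \<le> card U"
  shows "join D m Ls Rs = join_on_card_subsets D U r
           (\<lambda>S. {c \<in> S \<rightarrow>\<^sub>E D. \<forall>i<m. Ls i \<subseteq> S \<longrightarrow> restrict c (Ls i) \<in> Rs i})"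
proof -
  have cover: "\<exists>S. S \<subseteq> U \<and> card S = r \<and> Ls i \<subseteq> S" if "i < m" for i
    using exists_subset_between[of "Ls i" r U] assms that by blast
  have "(\<forall>i<m. restrict z (Ls i) \<in> Rs i) \<longleftrightarrow>
        (\<forall>S. S \<subseteq> U \<and> card S = r \<longrightarrow>
           (\<forall>i<m. Ls i \<subseteq> S \<longrightarrow> restrict z (S \<inter> Ls i) \<in> Rs i))" for z :: "nat \<Rightarrow> 'a"
  proof
    assume "\<forall>S. S \<subseteq> U \<and> card S = r \<longrightarrow>
              (\<forall>i<m. Ls i \<subseteq> S \<longrightarrow> restrict z (S \<inter> Ls i) \<in> Rs i)"
    then show "\<forall>i<m. restrict z (Ls i) \<in> Rs i"
      using cover by (metis Int_absorb1)
  qed (simp add: Int_absorb1)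
  then show ?thesis
    using assms(2) by (auto simp: join_def join_on_card_subsets_def restrict_PiE_iff)
qed

lemma card_relation_families:
  assumes "finite U" "finite D"
  shows "card (\<Pi>\<^sub>E S \<in> {S. S \<subseteq> U \<and> card S = r}. Pow (S \<rightarrow>\<^sub>E D))
           = 2 ^ ((card U choose r) * card D ^ r)"
proof -
  have "card (\<Pi>\<^sub>E S \<in> {S. S \<subseteq> U \<and> card S = r}. Pow (S \<rightarrow>\<^sub>E D))
          = (\<Prod>S \<in> {S. S \<subseteq> U \<and> card S = r}. card (Pow (S \<rightarrow>\<^sub>E D)))"
    using assms(1) by (intro card_PiE) simp
  also have "\<dots> = (\<Prod>S \<in> {S. S \<subseteq> U \<and> card S = r}. 2 ^ (card D ^ r))"
  proof (rule prod.cong[OF refl])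
    fix S assume "S \<in> {S. S \<subseteq> U \<and> card S = r}"
    then have "finite S" "card S = r"
      using assms(1) finite_subset by auto
    then show "card (Pow (S \<rightarrow>\<^sub>E D)) = 2 ^ (card D ^ r)"
      using assms(2) by (simp add: card_Pow card_PiE finite_PiE)
  qed
  also have "\<dots> = 2 ^ ((card U choose r) * card D ^ r)"
    using assms(1) by (simp add: n_subsets mult.commute flip: power_mult)
  finally show ?thesis .
qed

lemma projoin_reducible_in_image_of_families:
  assumes "projoin_reducible D n k R"
  shows "R \<in> (\<lambda>Q. proj (Sig n) (join_on_card_subsets D {1..n+k} (n - 1) Q))
               ` (\<Pi>\<^sub>E S \<in> {S. S \<subseteq> {1..n+k} \<and> card S = n - 1}. Pow (S \<rightarrow>\<^sub>E D))"
proof -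
  obtain m Ls Rs where U: "(\<Union>i<m. Ls i) = {1..n+k}"
    and L: "\<forall>i<m. card (Ls i) < n \<and> Rs i \<subseteq> Ls i \<rightarrow>\<^sub>E D"
    and R: "R = proj (Sig n) (join D m Ls Rs)"
    using projoin_reducible_standard_params[OF assms] .
  define Q where "Q = (\<lambda>S. {c \<in> S \<rightarrow>\<^sub>E D. \<forall>i<m. Ls i \<subseteq> S \<longrightarrow> restrict c (Ls i) \<in> Rs i})"
  define Subs where "Subs = {S. S \<subseteq> {1..n+k} \<and> card S = n - 1}"
  have "\<forall>i<m. card (Ls i) \<le> n - 1"
    using L by fastforce
  then have "R = proj (Sig n) (join_on_card_subsets D {1..n+k} (n - 1) Q)"
    using R U join_eq_join_on_card_subsets[of "{1..n+k}" Ls m "n - 1" D Rs]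
    by (simp add: Q_def)
  also have "join_on_card_subsets D {1..n+k} (n - 1) Q
               = join_on_card_subsets D {1..n+k} (n - 1) (restrict Q Subs)"
    by (simp add: join_on_card_subsets_def Subs_def)
  finally have "R = proj (Sig n) (join_on_card_subsets D {1..n+k} (n - 1) (restrict Q Subs))" .
  moreover have "restrict Q Subs \<in> (\<Pi>\<^sub>E S \<in> Subs. Pow (S \<rightarrow>\<^sub>E D))"
    by (auto simp: Q_def)
  ultimately show ?thesis
    unfolding Subs_def[symmetric] by blast
qed

lemma card_projoin_reducible_le:
  assumes "finite D"
  shows "card {R \<in> nary_relations D n. projoin_reducible D n k R}
           \<le> 2 ^ (((n + k) choose (n - 1)) * card D ^ (n - 1))"
proof -
  define F where "F = (\<Pi>\<^sub>E S \<in> {S. S \<subseteq> {1..n+k} \<and> card S = n - 1}. Pow (S \<rightarrow>\<^sub>E D))"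
  have "finite F"
    using assms by (auto simp: F_def intro!: finite_PiE intro: finite_subset)
  have "{R \<in> nary_relations D n. projoin_reducible D n k R}
          \<subseteq> (\<lambda>Q. proj (Sig n) (join_on_card_subsets D {1..n+k} (n - 1) Q)) ` F"
    using projoin_reducible_in_image_of_families unfolding F_def by blast
  then have "card {R \<in> nary_relations D n. projoin_reducible D n k R}
               \<le> card ((\<lambda>Q. proj (Sig n) (join_on_card_subsets D {1..n+k} (n - 1) Q)) ` F)"
    using \<open>finite F\<close> by (intro card_mono) auto
  also have "\<dots> \<le> card F"
    using \<open>finite F\<close> by (rule card_image_le)
  also have "\<dots> = 2 ^ (((n + k) choose (n - 1)) * card D ^ (n - 1))"
    unfolding F_def using assms by (simp add: card_relation_families)
  finally show ?thesis .
qed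

lemma reducible_share_le:
  assumes "finite D" "0 < n" "(n + k) choose (n - 1) \<le> card D"
  shows "reducible_share D n k \<le> (1 / 2) ^ (card D - ((n + k) choose (n - 1)))"
proof -
  define C d where "C = (n + k) choose (n - 1)" and "d = card D"
  have "d - C \<le> (d - C) * d ^ (n - 1)"
    using assms(3) by (cases "d = 0") (simp_all add: C_def d_def)
  then have "C * d ^ (n - 1) + (d - C) \<le> (C + (d - C)) * d ^ (n - 1)"
    by (simp add: add_mult_distrib)
  also have "\<dots> = d * d ^ (n - 1)"
    using assms(3) by (simp add: C_def d_def)
  also have "\<dots> = d ^ n"
    using power_minus_mult[OF assms(2), of d] by (simp add: mult.commute)
  finally have "(2::real) ^ (C * d ^ (n - 1)) * 2 ^ (d - C) \<le> 2 ^ (d ^ n)"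
    by (simp flip: power_add)
  then have "(2::real) ^ (C * d ^ (n - 1)) / 2 ^ (d ^ n) \<le> (1 / 2) ^ (d - C)"
    by (simp add: field_simps)
  moreover have "reducible_share D n k \<le> (2::real) ^ (C * d ^ (n - 1)) / 2 ^ (d ^ n)"
    unfolding reducible_share_def C_def d_def
    using card_projoin_reducible_le[OF assms(1), of n k]
    by (intro divide_right_mono) (simp_all flip: of_nat_power)
  ultimately show ?thesis
    by (simp add: C_def d_def)
qed

theorem theorem24:
  fixes n k :: nat
  assumes "n \<ge> 3"
  shows "(\<forall>D :: 'a set. finite D \<and> card D > (n + k) choose (n - 1) \<longrightarrow>
            reducible_share D n k < 1) \<and>
         (\<forall>\<epsilon> > 0. \<exists>N. \<forall>D :: 'a set. finite D \<and> card D \<ge> N \<longrightarrow>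
            reducible_share D n k < \<epsilon>)"
proof -
  define C where "C = (n + k) choose (n - 1)"
  have share_le: "reducible_share D n k \<le> (1 / 2) ^ (card D - C)"
    if "finite D" "C \<le> card D" for D :: "'a set"
    using reducible_share_le[of D n k] that assms by (simp add: C_def)
  have "reducible_share D n k < 1" if "finite D" "C < card D" for D :: "'a set"
    using share_le[OF that(1)] that(2) power_less_one_iff[of "1 / 2 :: real" "card D - C"]
    by fastforce
  moreover have "\<exists>N. \<forall>D :: 'a set. finite D \<and> card D \<ge> N \<longrightarrow> reducible_share D n k < \<epsilon>"
    if "0 < \<epsilon>" for \<epsilon> :: real
  proof -
    obtain M where M: "(1 / 2 :: real) ^ M < \<epsilon>"
      using real_arch_pow_inv[of \<epsilon> "1 / 2"] \<open>0 < \<epsilon>\<close> by auto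
    have "reducible_share D n k \<le> (1 / 2) ^ M" if "finite D" "C + M \<le> card D" for D :: "'a set"
    proof -
      have "reducible_share D n k \<le> (1 / 2) ^ (card D - C)"
        using share_le that by simp
      also have "\<dots> \<le> (1 / 2) ^ M"
        using that by (intro power_decreasing) auto
      finally show ?thesis .
    qed
    then show ?thesis
      using M by (meson le_less_trans)
  qed
  ultimately show ?thesis
    unfolding C_def by blast
qed

end
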